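(* Let $K\ge2$, $\varepsilon>0$, $Z^*\in\mathbb{R}^K_{>0}$, and $\gamma\in\mathcal{P}^\varepsilon(K)$ (the value of the rung density at the current $\mu$). For $\eta\ge0$ and $Z\in\mathbb{R}^K_{>0}$ let $o^*_\eta(Z)$ be the steady state of the tilt mean field, i.e. the solution $o\in\mathbb{R}^K_{>0}$ of $g^o_k(\pi^{\mathrm{TSS},\eta}(o),Z,o)=0$ for all $k$, and define $$D_\eta(Z)=\nabla_Z V_\gamma(Z)\cdot g^Z\big(\pi^{\mathrm{TSS},\eta}(o^*_\eta(Z)),Z\big),$$ the time derivative of $V_\gamma(Z(t))$ at the point $Z$ along the ODE $\dot Z=g^Z(\pi^{\mathrm{TSS},\eta}(o^*_\eta(Z)),Z)$. Then for all $Z\in\mathbb{R}^K_{>0}$ and all $\eta'>\eta\ge0$, $$D_{\eta'}(Z)\le D_\eta(Z)\le 0,$$ and both inequalities are strict unless $Z$ is a scalar multiple of $Z^*$, in which case both derivatives equal $0$.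
   Context: $\mathcal{P}^\varepsilon(K)$ is the set of probability vectors on $\{1,\dots,K\}$ with all entries $\ge\varepsilon$. For $\pi\in\mathcal P^\varepsilon(K)$ and $Z\in\mathbb{R}^K_{>0}$, the mean field of the partition function estimates is $g^Z_k(\pi,Z)=\dfrac{Z_k^*}{\sum_\ell\pi_\ell Z^*_\ell/Z_\ell}-Z_k$, and the mean field of the tilts is $g^o_k(\pi,Z,o)=\dfrac{1}{\gamma_k}\dfrac{\pi_kZ_k^*/Z_k}{\sum_\ell\pi_\ell Z_\ell^*/Z_\ell}-o_k$. The (unregularized) visit-control rung density with parameter $\eta\ge0$ is $\pi^{\mathrm{TSS},\eta}_k(o)=\dfrac{\gamma_k o_k^{-\eta}}{\sum_\ell\gamma_\ell o_\ell^{-\eta}}$. The Lyapunov function is the relative entropy $V_\gamma(Z)=-\sum_k\gamma_k\log(r_k/\gamma_k)$ with $r_k=\dfrac{\gamma_kZ_k^*/Z_k}{\sum_\ell\gamma_\ell Z^*_\ell/Z_\ell}$. *)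

theory Defs
  imports "HOL-Analysis.Analysis"
begin

text \<open>Vectors in R^K are modelled as real^'k for a finite index type 'k with CARD('k) = K.\<close>

definition Peps :: "real \<Rightarrow> (real^'k::finite) set" where
  "Peps \<epsilon> = {p. (\<forall>k. p$k \<ge> \<epsilon>) \<and> (\<Sum>k\<in>UNIV. p$k) = 1}"

definition gZ :: "real^'k::finite \<Rightarrow> real^'k \<Rightarrow> real^'k \<Rightarrow> real^'k" where
  "gZ Zs \<pi> Z = (\<chi> k. Zs$k / (\<Sum>l\<in>UNIV. \<pi>$l * Zs$l / Z$l) - Z$k)"

definition go :: "real^'k::finite \<Rightarrow> real^'k \<Rightarrow> real^'k \<Rightarrow> real^'k \<Rightarrow> real^'k \<Rightarrow> real^'k" where
  "go \<gamma> Zs \<pi> Z ot = (\<chi> k. (1 / \<gamma>$k) * ((\<pi>$k * Zs$k / Z$k) / (\<Sum>l\<in>UNIV. \<pi>$l * Zs$l / Z$l)) - ot$k)"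

definition piTSS :: "real^'k::finite \<Rightarrow> real \<Rightarrow> real^'k \<Rightarrow> real^'k" where
  "piTSS \<gamma> \<eta> ot = (\<chi> k. \<gamma>$k * (ot$k) powr (-\<eta>) / (\<Sum>l\<in>UNIV. \<gamma>$l * (ot$l) powr (-\<eta>)))"

definition rr :: "real^'k::finite \<Rightarrow> real^'k \<Rightarrow> real^'k \<Rightarrow> real^'k" where
  "rr \<gamma> Zs Z = (\<chi> k. (\<gamma>$k * Zs$k / Z$k) / (\<Sum>l\<in>UNIV. \<gamma>$l * Zs$l / Z$l))"

definition Vg :: "real^'k::finite \<Rightarrow> real^'k \<Rightarrow> real^'k \<Rightarrow> real" where
  "Vg \<gamma> Zs Z = - (\<Sum>k\<in>UNIV. \<gamma>$k * ln (rr \<gamma> Zs Z $ k / \<gamma>$k))"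

definition ostar :: "real^'k::finite \<Rightarrow> real^'k \<Rightarrow> real \<Rightarrow> real^'k \<Rightarrow> real^'k" where
  "ostar \<gamma> Zs \<eta> Z = (THE ot. (\<forall>k. ot$k > 0) \<and> go \<gamma> Zs (piTSS \<gamma> \<eta> ot) Z ot = 0)"

definition Dfun :: "real^'k::finite \<Rightarrow> real^'k \<Rightarrow> real \<Rightarrow> real^'k \<Rightarrow> real" where
  "Dfun \<gamma> Zs \<eta> Z = frechet_derivative (Vg \<gamma> Zs) (at Z) (gZ Zs (piTSS \<gamma> \<eta> (ostar \<gamma> Zs \<eta> Z)) Z)"

end

theory Submission
  imports Defs
begin

(* With a_k = Zs_k / Z_k and s = 1/(1+\<eta>), the steady state of the tilts is explicit,
   o*_k \<propto> a_k^s, and the rung density there is \<pi>_k \<propto> \<gamma>_k a_k^(s-1). A direct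
   computation gives D_\<eta>(Z) = - Var_\<gamma>(a) / (E_\<pi>[a] E_\<gamma>[a]), which is \<le> 0 with equality
   iff a is constant, i.e. iff Z is a multiple of Zs. Moreover E_\<pi>[a] = M(s) / M(s-1) with
   M(s) = \<Sum>_k \<gamma>_k a_k^s, and this ratio is strictly increasing in s for non-constant a
   (a Chebyshev-type sum inequality), hence strictly decreasing in \<eta>. *)

lemma powr_diff_mult_pos:
  fixes x y d :: real
  assumes "0 < x" "0 < y" "0 < d" "x \<noteq> y"
  shows "0 < (x - y) * (x powr d - y powr d)"
proof (cases "x < y")
  case True
  then show ?thesis using assms by (simp add: mult_neg_neg powr_less_mono2)
next
  case False
  then have "y < x" using assms(4) by simp
  then show ?thesis using assms by (simp add: powr_less_mono2)
qed

definition powr_moment :: "'a set \<Rightarrow> ('a \<Rightarrow> real) \<Rightarrow> ('a \<Rightarrow> real) \<Rightarrow> real \<Rightarrow> real" where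
  "powr_moment I w a s = (\<Sum>i\<in>I. w i * a i powr s)"

lemma powr_moment_pos:
  assumes "finite I" "I \<noteq> {}" "\<And>i. i \<in> I \<Longrightarrow> 0 < w i" "\<And>i. i \<in> I \<Longrightarrow> 0 < a i"
  shows "0 < powr_moment I w a s"
  unfolding powr_moment_def using assms by (intro sum_pos mult_pos_pos) (auto simp: less_imp_neq[symmetric])

lemma powr_moment_ratio_less:
  fixes w a :: "'a \<Rightarrow> real"
  assumes I: "finite I" and w: "\<And>i. i \<in> I \<Longrightarrow> 0 < w i" and a: "\<And>i. i \<in> I \<Longrightarrow> 0 < a i"
    and ij: "i \<in> I" "j \<in> I" "a i \<noteq> a j" and e: "e' < e"
  shows "powr_moment I w a e' / powr_moment I w a (e' - 1) < powr_moment I w a e / powr_moment I w a (e - 1)"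
proof -
  define d where "d = e - e'"
  define F where "F k l = w k * w l * (a k powr e * a l powr (e' - 1) - a k powr e' * a l powr (e - 1))" for k l
  define C where "C k l = w k * w l * (a k powr (e' - 1) * a l powr (e' - 1))" for k l
  have C_pos: "0 < C k l" if "k \<in> I" "l \<in> I" for k l
    unfolding C_def using w a that by (simp add: less_imp_neq[symmetric])
  have F_sym: "F k l + F l k = C k l * ((a k - a l) * (a k powr d - a l powr d))"
    if "k \<in> I" "l \<in> I" for k l
  proof -
    have split: "x powr e = x powr (e' - 1) * x * x powr d" "x powr e' = x powr (e' - 1) * x"
      "x powr (e - 1) = x powr (e' - 1) * x powr d" if "0 < x" for x :: real
    proof -
      show e': "x powr e' = x powr (e' - 1) * x"
        using that powr_add[of x "e' - 1" 1] by simp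
      show "x powr e = x powr (e' - 1) * x * x powr d"
        unfolding e'[symmetric] by (simp add: d_def powr_add[symmetric])
      show "x powr (e - 1) = x powr (e' - 1) * x powr d"
        by (simp add: d_def powr_add[symmetric])
    qed
    show ?thesis
      unfolding F_def C_def split[OF a[OF \<open>k \<in> I\<close>]] split[OF a[OF \<open>l \<in> I\<close>]]
      by (simp add: algebra_simps)
  qed
  have F_sym_nonneg: "0 \<le> F k l + F l k" if "k \<in> I" "l \<in> I" for k l
    using powr_diff_mult_pos[OF a[OF \<open>k \<in> I\<close>] a[OF \<open>l \<in> I\<close>], of d] C_pos[OF that] e
    unfolding F_sym[OF that] d_def by (cases "a k = a l") auto
  have "0 < (\<Sum>k\<in>I. \<Sum>l\<in>I. F k l + F l k)"
  proof (rule sum_pos2[OF I ij(1)])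
    show "0 < (\<Sum>l\<in>I. F i l + F l i)"
      using powr_diff_mult_pos[OF a[OF ij(1)] a[OF ij(2)], of d] C_pos[OF ij(1,2)] e ij
      by (intro sum_pos2[OF I ij(2)] F_sym_nonneg) (simp_all add: F_sym d_def)
  qed (auto intro!: sum_nonneg F_sym_nonneg)
  also have "\<dots> = 2 * (\<Sum>k\<in>I. \<Sum>l\<in>I. F k l)"
    using sum.swap[of "\<lambda>k l. F l k" I I] by (simp add: sum.distrib)
  also have "(\<Sum>k\<in>I. \<Sum>l\<in>I. F k l) = powr_moment I w a e * powr_moment I w a (e' - 1)
      - powr_moment I w a e' * powr_moment I w a (e - 1)"
    unfolding powr_moment_def F_def sum_product sum_subtractf[symmetric]
    by (intro sum.cong refl) (simp add: algebra_simps)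
  finally have "powr_moment I w a e' * powr_moment I w a (e - 1)
      < powr_moment I w a e * powr_moment I w a (e' - 1)"
    by simp
  moreover have "0 < powr_moment I w a s" for s
    using I ij(1) w a by (intro powr_moment_pos) auto
  ultimately show ?thesis
    by (simp add: divide_less_eq less_divide_eq mult.commute mult.left_commute)
qed

lemma weighted_variance_eq:
  fixes w a :: "'a \<Rightarrow> real"
  assumes "sum w I = 1"
  shows "(\<Sum>i\<in>I. w i * (a i - (\<Sum>j\<in>I. w j * a j))\<^sup>2)
       = (\<Sum>i\<in>I. w i * (a i)\<^sup>2) - (\<Sum>i\<in>I. w i * a i)\<^sup>2"
proof -
  define m where "m = (\<Sum>j\<in>I. w j * a j)"
  have "(\<Sum>i\<in>I. w i * (a i - m)\<^sup>2) = (\<Sum>i\<in>I. w i * (a i)\<^sup>2 - 2 * m * (w i * a i) + m\<^sup>2 * w i)"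
    by (intro sum.cong) (simp_all add: power2_diff algebra_simps)
  also have "\<dots> = (\<Sum>i\<in>I. w i * (a i)\<^sup>2) - m\<^sup>2"
    unfolding sum.distrib sum_subtractf sum_distrib_left[symmetric] assms m_def[symmetric]
    by (simp add: power2_eq_square)
  finally show ?thesis unfolding m_def .
qed

lemma Vg_eq_log_sum:
  fixes \<gamma> Zs Y :: "real^'k::finite"
  assumes \<gamma>: "\<And>k. 0 < \<gamma>$k" "(\<Sum>k\<in>UNIV. \<gamma>$k) = 1" and Zs: "\<And>k. 0 < Zs$k" and Y: "\<And>k. 0 < Y$k"
  shows "Vg \<gamma> Zs Y = (\<Sum>k\<in>UNIV. \<gamma>$k * (ln (Y$k) - ln (Zs$k))) + ln (\<Sum>k\<in>UNIV. \<gamma>$k * Zs$k / Y$k)"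
proof -
  define S where "S = (\<Sum>k\<in>UNIV. \<gamma>$k * Zs$k / Y$k)"
  have S: "0 < S" unfolding S_def using \<gamma> Zs Y by (intro sum_pos) auto
  have "ln (rr \<gamma> Zs Y $ k / \<gamma>$k) = ln (Zs$k) - ln (Y$k) - ln S" for k
    using \<gamma>(1)[of k] Zs[of k] Y[of k] S by (simp add: rr_def S_def[symmetric] ln_div ln_mult)
  then have "Vg \<gamma> Zs Y = - (\<Sum>k\<in>UNIV. \<gamma>$k * (ln (Zs$k) - ln (Y$k) - ln S))"
    unfolding Vg_def by presburger
  also have "\<dots> = (\<Sum>k\<in>UNIV. \<gamma>$k * (ln (Y$k) - ln (Zs$k))) + (\<Sum>k\<in>UNIV. \<gamma>$k) * ln S"
    by (simp add: algebra_simps sum_subtractf sum.distrib sum_distrib_left sum_negf)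
  finally show ?thesis using \<gamma>(2) by (simp add: S_def)
qed

lemma Vg_has_derivative:
  fixes \<gamma> Zs Z :: "real^'k::finite"
  assumes \<gamma>: "\<And>k. 0 < \<gamma>$k" "(\<Sum>k\<in>UNIV. \<gamma>$k) = 1" and Zs: "\<And>k. 0 < Zs$k" and Z: "\<And>k. 0 < Z$k"
  shows "(Vg \<gamma> Zs has_derivative (\<lambda>h. (\<Sum>k\<in>UNIV. \<gamma>$k * h$k / Z$k)
      - (\<Sum>k\<in>UNIV. \<gamma>$k * Zs$k * h$k / (Z$k)\<^sup>2) / (\<Sum>k\<in>UNIV. \<gamma>$k * Zs$k / Z$k))) (at Z)"
proof (rule has_derivative_transform_eventually)
  have S: "0 < (\<Sum>k\<in>UNIV. \<gamma>$k * Zs$k / Z$k)" using \<gamma> Zs Z by (intro sum_pos) auto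
  have nth: "((\<lambda>x. x$k) has_derivative (\<lambda>h. h$k)) F" for k and F :: "(real^'k) filter"
    by (rule bounded_linear_imp_has_derivative[OF bounded_linear_vec_nth])
  show "((\<lambda>Y. (\<Sum>k\<in>UNIV. \<gamma>$k * (ln (Y$k) - ln (Zs$k))) + ln (\<Sum>k\<in>UNIV. \<gamma>$k * Zs$k / Y$k))
      has_derivative (\<lambda>h. (\<Sum>k\<in>UNIV. \<gamma>$k * h$k / Z$k)
      - (\<Sum>k\<in>UNIV. \<gamma>$k * Zs$k * h$k / (Z$k)\<^sup>2) / (\<Sum>k\<in>UNIV. \<gamma>$k * Zs$k / Z$k))) (at Z)"
    using Z S
    by (auto intro!: derivative_eq_intros nth simp: less_imp_neq[symmetric])
      (simp add: fun_eq_iff sum_negf divide_inverse power2_eq_square mult.assoc)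
  have "\<forall>\<^sub>F Y in at Z. \<forall>k. 0 < Y$k"
  proof (rule eventually_all_finite)
    fix k
    have "((\<lambda>Y. Y$k) \<longlongrightarrow> Z$k) (at Z)"
      by (intro tendsto_vec_nth tendsto_ident_at)
    then show "\<forall>\<^sub>F Y in at Z. 0 < Y$k"
      using Z order_tendstoD(1) by blast
  qed
  then show "\<forall>\<^sub>F Y in at Z. (\<Sum>k\<in>UNIV. \<gamma>$k * (ln (Y$k) - ln (Zs$k))) + ln (\<Sum>k\<in>UNIV. \<gamma>$k * Zs$k / Y$k) = Vg \<gamma> Zs Y"
    by eventually_elim (simp add: Vg_eq_log_sum[OF \<gamma> Zs])
qed (simp_all add: Vg_eq_log_sum[OF \<gamma> Zs Z])

locale tss_state =
  fixes \<gamma> Zs Z :: "real^'k::finite"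
  assumes \<gamma>_pos: "\<And>k. 0 < \<gamma>$k" and \<gamma>_sum: "(\<Sum>k\<in>UNIV. \<gamma>$k) = 1"
    and Zs_pos: "\<And>k. 0 < Zs$k" and Z_pos: "\<And>k. 0 < Z$k"
begin

definition zratio :: "'k \<Rightarrow> real" where
  "zratio k = Zs$k / Z$k"

lemma zratio_pos: "0 < zratio k"
  unfolding zratio_def using Zs_pos Z_pos by simp

abbreviation moment :: "real \<Rightarrow> real" where
  "moment s \<equiv> powr_moment UNIV (($) \<gamma>) zratio s"

lemma moment_pos: "0 < moment s"
  using \<gamma>_pos zratio_pos by (intro powr_moment_pos) auto

definition tilt_fixpoint :: "real \<Rightarrow> real^'k" where
  "tilt_fixpoint \<eta> = (\<chi> k. zratio k powr (1 / (1 + \<eta>)) / moment (1 / (1 + \<eta>)))"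

lemma tilt_fixpoint_pos: "0 < tilt_fixpoint \<eta> $ k"
  unfolding tilt_fixpoint_def using zratio_pos moment_pos by (simp add: less_imp_neq[symmetric])

lemma piTSS_tilt_fixpoint:
  assumes "0 \<le> \<eta>"
  shows "piTSS \<gamma> \<eta> (tilt_fixpoint \<eta>) $ k
       = \<gamma>$k * zratio k powr (1 / (1 + \<eta>) - 1) / moment (1 / (1 + \<eta>) - 1)"
proof -
  define e where "e = 1 / (1 + \<eta>)"
  define G where "G = moment e"
  have "- (e * \<eta>) = e - 1" unfolding e_def using assms by (simp add: field_simps)
  then have tilt: "tilt_fixpoint \<eta> $ l powr (-\<eta>) = zratio l powr (e - 1) / G powr (-\<eta>)" for l
    unfolding tilt_fixpoint_def e_def[symmetric] G_def[symmetric]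
    using zratio_pos[of l] moment_pos[of e] by (simp add: G_def powr_divide powr_powr)
  have "piTSS \<gamma> \<eta> (tilt_fixpoint \<eta>) $ k
      = (\<gamma>$k * zratio k powr (e - 1) / G powr (-\<eta>)) / (\<Sum>l\<in>UNIV. \<gamma>$l * zratio l powr (e - 1) / G powr (-\<eta>))"
    unfolding piTSS_def tilt by simp
  also have "\<dots> = \<gamma>$k * zratio k powr (e - 1) / moment (e - 1)"
    using moment_pos[of e] by (simp add: G_def powr_moment_def sum_divide_distrib[symmetric])
  finally show ?thesis unfolding e_def .
qed

lemma piTSS_tilt_fixpoint_mul_zratio:
  assumes "0 \<le> \<eta>"
  shows "piTSS \<gamma> \<eta> (tilt_fixpoint \<eta>) $ k * zratio k
       = \<gamma>$k * zratio k powr (1 / (1 + \<eta>)) / moment (1 / (1 + \<eta>) - 1)"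
  using powr_add[of "zratio k" "1 / (1 + \<eta>) - 1" 1] zratio_pos[of k]
  by (simp add: piTSS_tilt_fixpoint[OF assms])

definition steady_rung_mean :: "real \<Rightarrow> real" where
  "steady_rung_mean \<eta> = moment (1 / (1 + \<eta>)) / moment (1 / (1 + \<eta>) - 1)"

lemma steady_rung_mean_pos: "0 < steady_rung_mean \<eta>"
  unfolding steady_rung_mean_def using moment_pos by simp

lemma steady_rung_mean_strict_antimono:
  assumes "\<not> (\<forall>i j. zratio i = zratio j)" "0 \<le> \<eta>" "\<eta> < \<eta>'"
  shows "steady_rung_mean \<eta>' < steady_rung_mean \<eta>"
proof -
  obtain i j where "zratio i \<noteq> zratio j" using assms(1) by blast
  moreover have "1 / (1 + \<eta>') < 1 / (1 + \<eta>)" using assms(2,3) by (simp add: frac_less2)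
  ultimately show ?thesis
    unfolding steady_rung_mean_def using \<gamma>_pos zratio_pos
    by (intro powr_moment_ratio_less) auto
qed

lemma sum_piTSS_tilt_fixpoint:
  assumes "0 \<le> \<eta>"
  shows "(\<Sum>l\<in>UNIV. piTSS \<gamma> \<eta> (tilt_fixpoint \<eta>) $ l * Zs$l / Z$l) = steady_rung_mean \<eta>"
  using piTSS_tilt_fixpoint_mul_zratio[OF assms]
  by (simp add: steady_rung_mean_def zratio_def powr_moment_def sum_divide_distrib[symmetric])

lemma go_tilt_fixpoint:
  assumes "0 \<le> \<eta>"
  shows "go \<gamma> Zs (piTSS \<gamma> \<eta> (tilt_fixpoint \<eta>)) Z (tilt_fixpoint \<eta>) = 0"
  using piTSS_tilt_fixpoint_mul_zratio[OF assms] \<gamma>_pos moment_pos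
  unfolding go_def sum_piTSS_tilt_fixpoint[OF assms]
  by (simp add: vec_eq_iff tilt_fixpoint_def steady_rung_mean_def zratio_def less_imp_neq[symmetric])

lemma go_eq_0_imp_tilt_fixpoint:
  assumes \<eta>: "0 \<le> \<eta>" and ot_pos: "\<And>k. 0 < ot$k" and go: "go \<gamma> Zs (piTSS \<gamma> \<eta> ot) Z ot = 0"
  shows "ot = tilt_fixpoint \<eta>"
proof -
  define e where "e = 1 / (1 + \<eta>)"
  define \<pi> where "\<pi> = piTSS \<gamma> \<eta> ot"
  define T where "T = (\<Sum>l\<in>UNIV. \<gamma>$l * ot$l powr (-\<eta>))"
  have T: "0 < T"
    unfolding T_def using \<gamma>_pos ot_pos by (intro sum_pos) (auto simp: less_imp_neq[symmetric])
  have \<pi>: "\<pi>$k = \<gamma>$k * ot$k powr (-\<eta>) / T" for k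
    unfolding \<pi>_def piTSS_def T_def by simp
  define S where "S = (\<Sum>l\<in>UNIV. \<pi>$l * Zs$l / Z$l)"
  have S: "0 < S"
    unfolding S_def \<pi> using \<gamma>_pos ot_pos Zs_pos Z_pos T
    by (intro sum_pos) (auto simp: less_imp_neq[symmetric])
  have balance: "\<gamma>$k * ot$k = \<pi>$k * zratio k / S" for k
  proof -
    have "(1 / \<gamma>$k) * ((\<pi>$k * Zs$k / Z$k) / S) = ot$k"
      using go unfolding go_def \<pi>_def[symmetric] S_def[symmetric] by (simp add: vec_eq_iff)
    then show ?thesis using \<gamma>_pos[of k] Z_pos[of k] S by (auto simp: zratio_def field_simps)
  qed
  have sum_one: "(\<Sum>k\<in>UNIV. \<gamma>$k * ot$k) = 1"
    unfolding balance sum_divide_distrib[symmetric] using S by (simp add: S_def zratio_def)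
  define c where "c = (1 / (T * S)) powr e"
  have ot: "ot$k = zratio k powr e * c" for k
  proof -
    have "ot$k * ot$k powr \<eta> = zratio k / (T * S)"
      using balance[of k] \<gamma>_pos[of k] ot_pos[of k] T S
      by (simp add: \<pi> powr_minus field_simps)
    then have "ot$k powr (1 + \<eta>) = zratio k / (T * S)"
      using ot_pos[of k] by (simp add: powr_add)
    moreover have "(ot$k powr (1 + \<eta>)) powr e = ot$k"
      using ot_pos[of k] \<eta> by (simp add: powr_powr e_def)
    ultimately have "ot$k = (zratio k / (T * S)) powr e"
      by simp
    then show ?thesis
      unfolding c_def using zratio_pos[of k] T S by (simp add: powr_divide powr_mult[symmetric] divide_inverse)
  qed
  have "c = 1 / moment e"
    using sum_one moment_pos[of e] unfolding ot
    by (simp add: powr_moment_def sum_distrib_left mult.assoc field_simps)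
  then show ?thesis
    unfolding vec_eq_iff tilt_fixpoint_def e_def[symmetric] using ot by simp
qed

lemma ostar_eq_tilt_fixpoint:
  assumes "0 \<le> \<eta>"
  shows "ostar \<gamma> Zs \<eta> Z = tilt_fixpoint \<eta>"
  unfolding ostar_def
  using tilt_fixpoint_pos go_tilt_fixpoint[OF assms] go_eq_0_imp_tilt_fixpoint[OF assms]
  by (intro the_equality) auto

definition ratio_mean :: real where
  "ratio_mean = (\<Sum>k\<in>UNIV. \<gamma>$k * zratio k)"

definition ratio_variance :: real where
  "ratio_variance = (\<Sum>k\<in>UNIV. \<gamma>$k * (zratio k - ratio_mean)\<^sup>2)"

lemma ratio_mean_pos: "0 < ratio_mean"
  unfolding ratio_mean_def using \<gamma>_pos zratio_pos by (intro sum_pos) auto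

lemma ratio_variance_nonneg: "0 \<le> ratio_variance"
  unfolding ratio_variance_def using \<gamma>_pos[THEN less_imp_le] by (intro sum_nonneg) simp

lemma ratio_variance_eq_0_iff: "ratio_variance = 0 \<longleftrightarrow> (\<forall>i j. zratio i = zratio j)"
proof
  assume "ratio_variance = 0"
  then have "\<forall>k. \<gamma>$k * (zratio k - ratio_mean)\<^sup>2 = 0"
    unfolding ratio_variance_def using \<gamma>_pos[THEN less_imp_le] by (subst (asm) sum_nonneg_eq_0_iff) auto
  then have "zratio k = ratio_mean" for k
    using less_imp_neq[OF \<gamma>_pos[of k]] by auto
  then show "\<forall>i j. zratio i = zratio j" by simp
next
  assume const: "\<forall>i j. zratio i = zratio j"
  have "ratio_mean = (\<Sum>l\<in>UNIV. \<gamma>$l) * zratio k" for k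
    unfolding ratio_mean_def sum_distrib_right using const by (intro sum.cong) auto
  then show "ratio_variance = 0"
    unfolding ratio_variance_def using \<gamma>_sum by simp
qed

lemma proportional_iff_zratio_const: "(\<exists>c. Z = c *\<^sub>R Zs) \<longleftrightarrow> (\<forall>i j. zratio i = zratio j)"
proof
  assume "\<exists>c. Z = c *\<^sub>R Zs"
  then obtain c where "Z = c *\<^sub>R Zs" by blast
  then show "\<forall>i j. zratio i = zratio j"
    unfolding zratio_def using Zs_pos by (simp add: less_imp_neq[symmetric])
next
  assume const: "\<forall>i j. zratio i = zratio j"
  fix k0 :: 'k
  have "Z$k = (1 / zratio k) * Zs$k" for k
    unfolding zratio_def using Zs_pos[of k] Z_pos[of k] by simp
  then have "Z = (1 / zratio k0) *\<^sub>R Zs"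
    using const by (simp add: vec_eq_iff)
  then show "\<exists>c. Z = c *\<^sub>R Zs" by blast
qed

lemma frechet_derivative_Vg_gZ:
  assumes P: "0 < (\<Sum>l\<in>UNIV. \<pi>$l * Zs$l / Z$l)"
  shows "frechet_derivative (Vg \<gamma> Zs) (at Z) (gZ Zs \<pi> Z)
       = - ratio_variance / ((\<Sum>l\<in>UNIV. \<pi>$l * Zs$l / Z$l) * ratio_mean)"
proof -
  define P where "P = (\<Sum>l\<in>UNIV. \<pi>$l * Zs$l / Z$l)"
  define A where "A = ratio_mean"
  define M where "M = (\<Sum>k\<in>UNIV. \<gamma>$k * (zratio k)\<^sup>2)"
  have P_pos: "0 < P" using P unfolding P_def .
  have A_pos: "0 < A" unfolding A_def by (rule ratio_mean_pos)
  have gZ: "gZ Zs \<pi> Z $ k = Z$k * (zratio k / P - 1)" for k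
    using Z_pos[of k] by (simp add: gZ_def P_def zratio_def field_simps)
  have "\<gamma>$k * gZ Zs \<pi> Z $ k / Z$k = \<gamma>$k * zratio k / P - \<gamma>$k" for k
    using Z_pos[of k] by (simp add: gZ field_simps)
  then have first: "(\<Sum>k\<in>UNIV. \<gamma>$k * gZ Zs \<pi> Z $ k / Z$k) = A / P - 1"
    using \<gamma>_sum by (simp add: A_def ratio_mean_def sum_subtractf sum_divide_distrib[symmetric])
  have "\<gamma>$k * Zs$k * gZ Zs \<pi> Z $ k / (Z$k)\<^sup>2 = \<gamma>$k * (zratio k)\<^sup>2 / P - \<gamma>$k * zratio k" for k
    using Z_pos[of k] by (simp add: gZ zratio_def power2_eq_square field_simps)
  then have second: "(\<Sum>k\<in>UNIV. \<gamma>$k * Zs$k * gZ Zs \<pi> Z $ k / (Z$k)\<^sup>2) = M / P - A"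
    by (simp add: A_def M_def ratio_mean_def sum_subtractf sum_divide_distrib[symmetric])
  have "frechet_derivative (Vg \<gamma> Zs) (at Z) (gZ Zs \<pi> Z) = A / P - 1 - (M / P - A) / A"
    unfolding frechet_derivative_at[OF Vg_has_derivative[OF \<gamma>_pos \<gamma>_sum Zs_pos Z_pos], symmetric]
      first second
    by (simp add: A_def ratio_mean_def zratio_def)
  also have "\<dots> = - (M - A\<^sup>2) / (P * A)"
    using A_pos P_pos by (simp add: field_simps power2_eq_square)
  also have "M - A\<^sup>2 = ratio_variance"
    unfolding M_def A_def ratio_variance_def ratio_mean_def by (rule weighted_variance_eq[OF \<gamma>_sum, symmetric])
  finally show ?thesis unfolding P_def A_def .
qed

lemma Dfun_eq:
  assumes "0 \<le> \<eta>"
  shows "Dfun \<gamma> Zs \<eta> Z = - ratio_variance / (steady_rung_mean \<eta> * ratio_mean)"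
  unfolding Dfun_def ostar_eq_tilt_fixpoint[OF assms] sum_piTSS_tilt_fixpoint[OF assms, symmetric]
  using steady_rung_mean_pos sum_piTSS_tilt_fixpoint[OF assms]
  by (intro frechet_derivative_Vg_gZ) simp

end

theorem proposition2:
  fixes Zs \<gamma> :: "real^'k::finite" and \<epsilon> :: real
  assumes "CARD('k) \<ge> 2"
    and "\<epsilon> > 0"
    and "\<forall>k. Zs$k > 0"
    and "\<gamma> \<in> Peps \<epsilon>"
  shows "\<forall>Z \<eta> \<eta>'. (\<forall>k. Z$k > 0) \<longrightarrow> 0 \<le> \<eta> \<longrightarrow> \<eta> < \<eta>' \<longrightarrow>
     Dfun \<gamma> Zs \<eta>' Z \<le> Dfun \<gamma> Zs \<eta> Z \<and> Dfun \<gamma> Zs \<eta> Z \<le> 0 \<and>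
     ((\<exists>c. Z = c *\<^sub>R Zs) \<longrightarrow> Dfun \<gamma> Zs \<eta>' Z = 0 \<and> Dfun \<gamma> Zs \<eta> Z = 0) \<and>
     ((\<nexists>c. Z = c *\<^sub>R Zs) \<longrightarrow> Dfun \<gamma> Zs \<eta>' Z < Dfun \<gamma> Zs \<eta> Z \<and> Dfun \<gamma> Zs \<eta> Z < 0)"
proof (intro allI impI)
  fix Z :: "real^'k" and \<eta> \<eta>' :: real
  assume Z: "\<forall>k. Z$k > 0" and \<eta>: "0 \<le> \<eta>" and \<eta>\<eta>': "\<eta> < \<eta>'"
  interpret tss_state \<gamma> Zs Z
    using assms(2-4) Z unfolding Peps_def by unfold_locales (auto intro: less_le_trans)
  have D: "Dfun \<gamma> Zs \<eta> Z = - ratio_variance / (steady_rung_mean \<eta> * ratio_mean)"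
    "Dfun \<gamma> Zs \<eta>' Z = - ratio_variance / (steady_rung_mean \<eta>' * ratio_mean)"
    using Dfun_eq \<eta> \<eta>\<eta>' by simp_all
  show "Dfun \<gamma> Zs \<eta>' Z \<le> Dfun \<gamma> Zs \<eta> Z \<and> Dfun \<gamma> Zs \<eta> Z \<le> 0 \<and>
     ((\<exists>c. Z = c *\<^sub>R Zs) \<longrightarrow> Dfun \<gamma> Zs \<eta>' Z = 0 \<and> Dfun \<gamma> Zs \<eta> Z = 0) \<and>
     ((\<nexists>c. Z = c *\<^sub>R Zs) \<longrightarrow> Dfun \<gamma> Zs \<eta>' Z < Dfun \<gamma> Zs \<eta> Z \<and> Dfun \<gamma> Zs \<eta> Z < 0)"
  proof (cases "\<exists>c. Z = c *\<^sub>R Zs")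
    case True
    then have "ratio_variance = 0"
      by (simp add: ratio_variance_eq_0_iff proportional_iff_zratio_const)
    then show ?thesis using True D by simp
  next
    case False
    then have nonconst: "\<not> (\<forall>i j. zratio i = zratio j)"
      by (simp add: proportional_iff_zratio_const)
    then have var: "0 < ratio_variance"
      using ratio_variance_nonneg ratio_variance_eq_0_iff by fastforce
    have "0 < ratio_variance / (steady_rung_mean \<eta> * ratio_mean)"
      using var steady_rung_mean_pos ratio_mean_pos by simp
    moreover have "ratio_variance / (steady_rung_mean \<eta> * ratio_mean)
        < ratio_variance / (steady_rung_mean \<eta>' * ratio_mean)"
      using steady_rung_mean_strict_antimono[OF nonconst \<eta> \<eta>\<eta>'] steady_rung_mean_pos ratio_mean_pos var
      by (intro divide_strict_left_mono) auto
    ultimately show ?thesis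
      using False D by simp
  qed
qed

end
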